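(* Let $p$ be an odd prime and $r\geq 2$ an integer with $p\nmid r$. Let $S$ be the smallest set of positive integers such that (a) $r\in S$; (b) $n\in S$ whenever $n^{p-1}\in S$; (c) $(n+p)^{p-1}\in S$ whenever $n\in S$. Then $S=\{n\geq 2: n\not\equiv 0\pmod p\}$.
   Context: "Smallest" means contained in every set of positive integers satisfying (a), (b), (c). *)

theory Defs
  imports "HOL-Computational_Algebra.Primes"
begin

inductive_set genS :: "nat \<Rightarrow> nat \<Rightarrow> nat set" for p r :: nat where
  base: "0 < r \<Longrightarrow> r \<in> genS p r"
| root: "0 < n \<Longrightarrow> n ^ (p - 1) \<in> genS p r \<Longrightarrow> n \<in> genS p r"
| pow: "n \<in> genS p r \<Longrightarrow> (n + p) ^ (p - 1) \<in> genS p r"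

end

theory Submission
  imports Defs "HOL-Number_Theory.Number_Theory"
begin

text \<open>Combining (c) with (b) shows that \<open>S\<close> is closed under \<open>n \<mapsto> n + p\<close>, so every
  \<open>x \<ge> a\<close> with \<open>x \<equiv> a (mod p)\<close> lies in \<open>S\<close> as soon as \<open>a\<close> does. Take
  \<open>a = (r + p)^(p-1) \<in> S\<close>, which is \<open>\<equiv> 1 (mod p)\<close> by Fermat. For \<open>m \<ge> 2\<close> prime to \<open>p\<close>,
  Fermat again gives \<open>m^((p-1)^a) \<equiv> 1 \<equiv> a (mod p)\<close>, and this number exceeds \<open>a\<close>
  because \<open>p - 1 \<ge> 2\<close>; hence it lies in \<open>S\<close>, and \<open>a\<close> applications of (b) bring it
  down to \<open>m\<close>.\<close>

lemma genS_pos: "n \<in> genS p r \<Longrightarrow> 0 < n"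
  by (induction rule: genS.induct) simp_all

lemma genS_subset:
  fixes p r :: nat
  assumes "prime p" and "2 \<le> r" and "\<not> p dvd r"
  shows "genS p r \<subseteq> {n. 2 \<le> n \<and> \<not> p dvd n}"
proof
  fix n assume "n \<in> genS p r"
  then show "n \<in> {n. 2 \<le> n \<and> \<not> p dvd n}"
  proof (induction rule: genS.induct)
    case base
    then show ?case using assms by simp
  next
    case (root n)
    have "p - 1 \<noteq> 0" using prime_gt_1_nat[OF assms(1)] by simp
    then have "n \<noteq> 1" and "\<not> p dvd n"
      using root.IH prime_dvd_power_nat_iff[OF assms(1)] by auto
    then show ?case using root.hyps(1) by simp
  next
    case (pow n)
    have "\<not> p dvd n + p" using pow.IH by simp
    then have "\<not> p dvd (n + p) ^ (p - 1)" using prime_dvd_power_nat[OF assms(1)] by blast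
    moreover have "n + p \<le> (n + p) ^ (p - 1)"
      using prime_gt_1_nat[OF assms(1)] by (simp add: self_le_power)
    ultimately show ?case using pow.IH by simp
  qed
qed

lemma genS_add_mult: "n \<in> genS p r \<Longrightarrow> n + k * p \<in> genS p r"
proof (induction k)
  case (Suc k)
  have "(n + k * p + p) ^ (p - 1) \<in> genS p r"
    using genS.pow[OF Suc.IH[OF Suc.prems]] .
  moreover have "0 < n + k * p + p" using genS_pos[OF Suc.prems] by simp
  ultimately have "n + k * p + p \<in> genS p r" by (rule genS.root[rotated])
  moreover have "n + Suc k * p = n + k * p + p" by simp
  ultimately show ?case by (simp only:)
qed simp

lemma genS_cong_mem:
  assumes "a \<in> genS p r" and "a \<le> x" and "[x = a] (mod p)"
  shows "x \<in> genS p r"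
proof -
  obtain k where "x = k * p + a" using cong_le_nat[OF assms(2)] assms(3) by blast
  then show ?thesis using genS_add_mult[OF assms(1), of k] by (simp add: add.commute)
qed

lemma genS_iterated_root:
  assumes "0 < m" shows "m ^ ((p - 1) ^ j) \<in> genS p r \<Longrightarrow> m \<in> genS p r"
proof (induction j)
  case (Suc j)
  have "(m ^ ((p - 1) ^ j)) ^ (p - 1) \<in> genS p r"
    using Suc.prems by (simp add: power_mult[symmetric] mult.commute)
  moreover have "0 < m ^ ((p - 1) ^ j)" using assms by simp
  ultimately have "m ^ ((p - 1) ^ j) \<in> genS p r" by (rule genS.root[rotated])
  then show ?case by (rule Suc.IH)
qed simp

lemma fermat_theorem_power_exponent:
  fixes p m :: nat
  assumes "prime p" and "\<not> p dvd m" and "0 < j"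
  shows "[m ^ ((p - 1) ^ j) = 1] (mod p)"
proof -
  obtain i where "j = Suc i" using assms(3) gr0_conv_Suc by blast
  then have "m ^ ((p - 1) ^ j) = (m ^ (p - 1)) ^ ((p - 1) ^ i)"
    by (simp add: power_mult)
  also have "[\<dots> = 1 ^ ((p - 1) ^ i)] (mod p)"
    using cong_pow fermat_theorem[OF assms(1,2)] by blast
  finally show ?thesis by simp
qed

lemma le_power_power_self:
  fixes a m q :: nat
  assumes "2 \<le> m" and "2 \<le> q"
  shows "a \<le> m ^ q ^ a"
proof -
  have "a < 2 ^ a" by (rule less_exp)
  also have "\<dots> \<le> q ^ a" using assms(2) by (rule power_mono) simp
  also have "\<dots> < 2 ^ q ^ a" by (rule less_exp)
  also have "\<dots> \<le> m ^ q ^ a" using assms(1) by (rule power_mono) simp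
  finally show ?thesis by simp
qed

lemma not_dvd_mem_genS:
  fixes p r m :: nat
  assumes "prime p" and "odd p" and "2 \<le> r" and "\<not> p dvd r"
    and "2 \<le> m" and "\<not> p dvd m"
  shows "m \<in> genS p r"
proof -
  define a where "a = (r + p) ^ (p - 1)"
  have a_mem: "a \<in> genS p r"
    unfolding a_def using genS.pow[OF genS.base] assms(3) by simp
  have "[a = 1] (mod p)"
    unfolding a_def using fermat_theorem[OF assms(1)] assms(4) by simp
  moreover have "[m ^ ((p - 1) ^ a) = 1] (mod p)"
    using fermat_theorem_power_exponent[OF assms(1,6)] genS_pos[OF a_mem] .
  ultimately have "[m ^ ((p - 1) ^ a) = a] (mod p)" by (metis cong_sym cong_trans)
  moreover have "2 \<le> p - 1"
    using assms(2) prime_ge_2_nat[OF assms(1)] by (cases "p = 2") auto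
  then have "a \<le> m ^ ((p - 1) ^ a)" by (rule le_power_power_self[OF assms(5)])
  ultimately have "m ^ ((p - 1) ^ a) \<in> genS p r" using a_mem genS_cong_mem by blast
  then show ?thesis using genS_iterated_root assms(5) by simp
qed

theorem lemma18:
  fixes p r :: nat
  assumes "prime p" and "odd p" and "2 \<le> r" and "\<not> p dvd r"
  shows "genS p r = {n. 2 \<le> n \<and> \<not> p dvd n}"
proof
  show "genS p r \<subseteq> {n. 2 \<le> n \<and> \<not> p dvd n}"
    using genS_subset assms(1,3,4) .
  show "{n. 2 \<le> n \<and> \<not> p dvd n} \<subseteq> genS p r"
    using not_dvd_mem_genS[OF assms] by blast
qed

end
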